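(* Let $\Omega\subset\mathbb{R}^2$ be a bounded planar domain admitting $p$-frames ($p\ge1$ an integer), and let $T$ be an invertible real $2\times2$ matrix. Then $$\frac{A(T(\Omega))^{1+p}}{I_{2p}(T(\Omega))}=\frac{A(T^{-1}(\Omega))^{1+p}}{I_{2p}(T^{-1}(\Omega))}.$$
   Context: $G_\Omega=\{U\in O(2):U(\Omega)=\Omega\}$; $\Omega$ admits $p$-frames if every $G_\Omega$-invariant homogeneous polynomial of degree $2p$ on $\mathbb{R}^2$ is a scalar multiple of $|x|^{2p}$. $A(D)$ is area and $I_{2p}(D)=\int_D|x|^{2p}dx$. *)

theory Defs
  imports "HOL-Analysis.Analysis"
begin

definition sym_group :: "(real^2) set \<Rightarrow> (real^2^2) set" where
  "sym_group \<Omega> = {U. orthogonal_matrix U \<and> (\<lambda>x. U *v x) ` \<Omega> = \<Omega>}"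

definition homog_poly :: "nat \<Rightarrow> (real^2 \<Rightarrow> real) \<Rightarrow> bool" where
  "homog_poly d f \<longleftrightarrow> (\<exists>c :: nat \<Rightarrow> real.
      \<forall>x. f x = (\<Sum>k\<le>d. c k * (x$1) ^ k * (x$2) ^ (d - k)))"

definition admits_p_frames :: "nat \<Rightarrow> (real^2) set \<Rightarrow> bool" where
  "admits_p_frames p \<Omega> \<longleftrightarrow>
     (\<forall>f. homog_poly (2*p) f \<and> (\<forall>U\<in>sym_group \<Omega>. \<forall>x. f (U *v x) = f x)
          \<longrightarrow> (\<exists>a::real. \<forall>x. f x = a * norm x ^ (2*p)))"

definition area :: "(real^2) set \<Rightarrow> real" where
  "area D = measure lebesgue D"

definition I_moment :: "nat \<Rightarrow> (real^2) set \<Rightarrow> real" where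
  "I_moment q D = integral D (\<lambda>x. norm x ^ q)"

end

theory Submission
  imports Defs
begin

text \<open>
  By linear changes of variables, \<open>A(T \<Omega>) = |det T| A(\<Omega>)\<close>, \<open>I(T \<Omega>) = |det T| \<integral>\<^sub>\<Omega> |T x|^2p\<close>
  and \<open>I(T\<^sup>-\<^sup>1 \<Omega>) = |det T|^(-1-2p) \<integral>\<^sub>\<Omega> (det T^2 |T\<^sup>-\<^sup>1 x|^2)^p\<close>, so the claim reduces to the
  equality of the two integrals. The quadratic forms \<open>|T x|^2\<close> and \<open>det T^2 |T\<^sup>-\<^sup>1 x|^2\<close> have
  the same trace and determinant, hence the same eigenvalues \<open>l1, l2\<close>, so both are of the form
  \<open>l1 \<langle>v, x\<rangle>^2 + l2 \<langle>v\<^sup>\<bottom>, x\<rangle>^2\<close> with \<open>|v| = 1\<close>. As a function of \<open>v\<close>, the integral over \<open>\<Omega>\<close>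
  of the \<open>p\<close>-th power of this form is a \<open>G\<^sub>\<Omega>\<close>-invariant homogeneous polynomial of degree \<open>2p\<close>,
  hence a multiple of \<open>|v|^2p\<close> because \<open>\<Omega>\<close> admits \<open>p\<close>-frames; so it is the same for all
  unit vectors \<open>v\<close>.
\<close>

lemma continuous_absolutely_integrable_on_bounded:
  fixes h :: "'a::euclidean_space \<Rightarrow> real"
  assumes "continuous_on UNIV h" "bounded S" "S \<in> sets lebesgue"
  shows "h absolutely_integrable_on S"
proof -
  obtain a b where "S \<subseteq> cbox a b"
    using assms(2) bounded_subset_cbox_symmetric by metis
  moreover have "h absolutely_integrable_on cbox a b"
    using absolutely_integrable_continuous assms(1) continuous_on_subset by blast
  ultimately show ?thesis
    using assms(3) set_integrable_subset by blast
qed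

lemma integral_linear_image_real:
  fixes h :: "real^'n::{finite,wellorder} \<Rightarrow> real" and g :: "real^'n::_ \<Rightarrow> real^'n::_"
  assumes "linear g" "(h \<circ> g) absolutely_integrable_on S"
  shows "integral (g ` S) h = \<bar>det (matrix g)\<bar> * integral S (h \<circ> g)"
proof -
  let ?f = "\<lambda>x. (vec (h x) :: real^1)"
  have "(\<lambda>x. (h \<circ> g) x *\<^sub>R (vec 1 :: real^1)) absolutely_integrable_on S"
    using absolutely_integrable_scaleR_right[OF assms(2)] .
  moreover have "(\<lambda>x. (h \<circ> g) x *\<^sub>R (vec 1 :: real^1)) = ?f \<circ> g"
    by (auto simp: vec_eq_iff)
  ultimately have int_fg: "(?f \<circ> g) absolutely_integrable_on S"
    by simp
  then have int_f: "?f absolutely_integrable_on (g ` S)"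
    using absolutely_integrable_on_linear_image[OF assms(1)] by blast
  have "integral (g ` S) ?f = \<bar>det (matrix g)\<bar> *\<^sub>R integral S (?f \<circ> g)"
    using integral_change_of_variables_linear[OF assms(1)] int_fg by blast
  moreover have "integral (g ` S) h = integral (g ` S) ?f $ 1"
    using integral_component_eq_cart[of ?f "g ` S" 1] int_f absolutely_integrable_on_def by auto
  moreover have "integral S (h \<circ> g) = integral S (?f \<circ> g) $ 1"
    using integral_component_eq_cart[of "?f \<circ> g" S 1] int_fg absolutely_integrable_on_def
    by (auto simp: o_def)
  ultimately show ?thesis
    by simp
qed

lemma integral_orthogonal_invariant:
  fixes h :: "real^'n::{finite,wellorder} \<Rightarrow> real"
  assumes U: "orthogonal_matrix U" and image_eq: "(\<lambda>x. U *v x) ` S = S"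
    and h: "continuous_on UNIV h" and S: "bounded S" "S \<in> sets lebesgue"
  shows "integral S (\<lambda>x. h (transpose U *v x)) = integral S h"
proof -
  let ?g = "\<lambda>x. transpose U *v x"
  have "?g (U *v x) = x" for x
    using U unfolding orthogonal_matrix_def by (metis matrix_vector_mul_assoc matrix_vector_mul_lid)
  then have "?g ` (\<lambda>x. U *v x) ` S = S"
    by (simp only: image_image image_ident)
  then have image_g: "?g ` S = S"
    by (simp only: image_eq)
  have "\<bar>det (matrix ?g)\<bar> = \<bar>det U\<bar>"
    by (simp only: matrix_of_matrix_vector_mul det_transpose)
  then have det_g: "\<bar>det (matrix ?g)\<bar> = 1"
    using det_orthogonal_matrix[OF U] by auto
  have "continuous_on UNIV ?g"
    by (rule linear_continuous_on[OF matrix_vector_mul_bounded_linear])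
  then have "continuous_on UNIV (h \<circ> ?g)"
    by (rule continuous_on_compose) (rule continuous_on_subset[OF h], simp)
  then have "(h \<circ> ?g) absolutely_integrable_on S"
    by (rule continuous_absolutely_integrable_on_bounded[OF _ S])
  then have "integral (?g ` S) h = \<bar>det (matrix ?g)\<bar> * integral S (h \<circ> ?g)"
    by (rule integral_linear_image_real[OF matrix_vector_mul_linear])
  then show ?thesis
    unfolding image_g det_g by (simp add: o_def)
qed

section \<open>Homogeneous polynomials with continuous coefficients\<close>

text \<open>A homogeneous polynomial in \<open>z\<close> whose coefficients are continuous in the parameter \<open>x\<close>,
  so that it can be integrated over \<open>x\<close>.\<close>

definition homog_poly_family :: "nat \<Rightarrow> (real^2 \<Rightarrow> real^2 \<Rightarrow> real) \<Rightarrow> bool" where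
  "homog_poly_family d G \<longleftrightarrow> (\<exists>c::nat \<Rightarrow> real^2 \<Rightarrow> real. (\<forall>k. continuous_on UNIV (c k)) \<and>
      (\<forall>x z. G x z = (\<Sum>k\<le>d. c k x * (z$1)^k * (z$2)^(d-k))))"

lemma homog_poly_family_const: "continuous_on UNIV a \<Longrightarrow> homog_poly_family 0 (\<lambda>x z. a x)"
  unfolding homog_poly_family_def by (rule exI[of _ "\<lambda>k. a"]) auto

lemma homog_poly_family_zero: "homog_poly_family d (\<lambda>x z. 0)"
  unfolding homog_poly_family_def by (intro exI[of _ "\<lambda>k x. 0"]) auto

lemma homog_poly_family_add:
  assumes "homog_poly_family d G" "homog_poly_family d H"
  shows "homog_poly_family d (\<lambda>x z. G x z + H x z)"
proof -
  obtain c where c: "\<And>k. continuous_on UNIV (c k)"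
    "\<And>x z. G x z = (\<Sum>k\<le>d. c k x * (z$1)^k * (z$2)^(d-k))"
    using assms(1) unfolding homog_poly_family_def by blast
  obtain b where b: "\<And>k. continuous_on UNIV (b k)"
    "\<And>x z. H x z = (\<Sum>k\<le>d. b k x * (z$1)^k * (z$2)^(d-k))"
    using assms(2) unfolding homog_poly_family_def by blast
  have "continuous_on UNIV (\<lambda>x. c k x + b k x)" for k
    using b(1) c(1) by (intro continuous_intros)
  moreover have "G x z + H x z = (\<Sum>k\<le>d. (c k x + b k x) * (z$1)^k * (z$2)^(d-k))" for x z
    unfolding b(2) c(2) by (simp add: sum.distrib[symmetric] algebra_simps)
  ultimately show ?thesis
    unfolding homog_poly_family_def by (intro exI[of _ "\<lambda>k x. c k x + b k x"]) blast
qed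

lemma homog_poly_family_sum:
  "finite I \<Longrightarrow> (\<And>i. i \<in> I \<Longrightarrow> homog_poly_family d (F i))
    \<Longrightarrow> homog_poly_family d (\<lambda>x z. \<Sum>i\<in>I. F i x z)"
  by (induction I rule: finite_induct) (simp_all add: homog_poly_family_zero homog_poly_family_add)

lemma homog_poly_family_cmult:
  assumes "continuous_on UNIV a" "homog_poly_family d G"
  shows "homog_poly_family d (\<lambda>x z. a x * G x z)"
proof -
  obtain c where c: "\<And>k. continuous_on UNIV (c k)"
    "\<And>x z. G x z = (\<Sum>k\<le>d. c k x * (z$1)^k * (z$2)^(d-k))"
    using assms(2) unfolding homog_poly_family_def by blast
  have "continuous_on UNIV (\<lambda>x. a x * c k x)" for k
    using assms(1) c(1) by (intro continuous_intros)
  moreover have "a x * G x z = (\<Sum>k\<le>d. (a x * c k x) * (z$1)^k * (z$2)^(d-k))" for x z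
    unfolding c(2) by (simp add: sum_distrib_left algebra_simps)
  ultimately show ?thesis
    unfolding homog_poly_family_def by (intro exI[of _ "\<lambda>k x. a x * c k x"]) blast
qed

lemma homog_poly_family_mult_coord1:
  assumes "homog_poly_family d G"
  shows "homog_poly_family (Suc d) (\<lambda>x z. z$1 * G x z)"
proof -
  obtain c where c: "\<And>k. continuous_on UNIV (c k)"
    "\<And>x z. G x z = (\<Sum>k\<le>d. c k x * (z$1)^k * (z$2)^(d-k))"
    using assms unfolding homog_poly_family_def by blast
  define c' where "c' k = (if k = 0 then (\<lambda>x. 0) else c (k - 1))" for k
  have "continuous_on UNIV (c' k)" for k
    using c(1) by (cases k) (auto simp: c'_def)
  moreover have "z$1 * G x z = (\<Sum>k\<le>Suc d. c' k x * (z$1)^k * (z$2)^(Suc d - k))" for x z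
    unfolding c(2) sum.atMost_Suc_shift by (simp add: c'_def sum_distrib_left algebra_simps)
  ultimately show ?thesis
    unfolding homog_poly_family_def by blast
qed

lemma homog_poly_family_mult_coord2:
  assumes "homog_poly_family d G"
  shows "homog_poly_family (Suc d) (\<lambda>x z. z$2 * G x z)"
proof -
  obtain c where c: "\<And>k. continuous_on UNIV (c k)"
    "\<And>x z. G x z = (\<Sum>k\<le>d. c k x * (z$1)^k * (z$2)^(d-k))"
    using assms unfolding homog_poly_family_def by blast
  define c' where "c' k = (if k \<le> d then c k else (\<lambda>x. 0))" for k
  have "continuous_on UNIV (c' k)" for k
    using c(1) by (auto simp: c'_def)
  moreover have "z$2 * G x z = (\<Sum>k\<le>Suc d. c' k x * (z$1)^k * (z$2)^(Suc d - k))" for x z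
  proof -
    have "(\<Sum>k\<le>Suc d. c' k x * (z$1)^k * (z$2)^(Suc d - k))
        = (\<Sum>k\<le>d. z$2 * (c k x * (z$1)^k * (z$2)^(d-k)))"
      by (simp add: c'_def, rule sum.cong) (auto simp: Suc_diff_le)
    then show ?thesis
      unfolding c(2) by (simp add: sum_distrib_left)
  qed
  ultimately show ?thesis
    unfolding homog_poly_family_def by blast
qed

lemma homog_poly_family_monomial:
  assumes "homog_poly_family d G"
  shows "homog_poly_family (d + i + j) (\<lambda>x z. G x z * (z$1)^i * (z$2)^j)"
proof -
  have coord1: "homog_poly_family (d + i) (\<lambda>x z. G x z * (z$1)^i)"
  proof (induction i)
    case (Suc i)
    then show ?case
      using homog_poly_family_mult_coord1[OF Suc.IH] by (simp add: algebra_simps)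
  qed (simp add: assms)
  show ?thesis
  proof (induction j)
    case (Suc j)
    then show ?case
      using homog_poly_family_mult_coord2[OF Suc.IH] by (simp add: algebra_simps)
  qed (simp add: coord1)
qed

lemma homog_poly_family_mult:
  assumes "homog_poly_family d1 G" "homog_poly_family d2 H"
  shows "homog_poly_family (d1 + d2) (\<lambda>x z. G x z * H x z)"
proof -
  obtain b where b: "\<And>k. continuous_on UNIV (b k)"
    "\<And>x z. H x z = (\<Sum>k\<le>d2. b k x * (z$1)^k * (z$2)^(d2-k))"
    using assms(2) unfolding homog_poly_family_def by blast
  have "homog_poly_family (d1 + d2) (\<lambda>x z. b k x * (G x z * (z$1)^k * (z$2)^(d2-k)))"
    if "k \<le> d2" for k
    using homog_poly_family_cmult[OF b(1) homog_poly_family_monomial[OF assms(1), of k "d2 - k"]]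
      that by simp
  then have "homog_poly_family (d1 + d2)
      (\<lambda>x z. \<Sum>k\<le>d2. b k x * (G x z * (z$1)^k * (z$2)^(d2-k)))"
    by (intro homog_poly_family_sum) auto
  then show ?thesis
    unfolding b(2) by (simp add: sum_distrib_left algebra_simps)
qed

lemma homog_poly_family_power:
  assumes "homog_poly_family d G"
  shows "homog_poly_family (n * d) (\<lambda>x z. G x z ^ n)"
proof (induction n)
  case 0
  then show ?case
    using homog_poly_family_const[of "\<lambda>x. 1"] by simp
next
  case (Suc n)
  then show ?case
    using homog_poly_family_mult[OF assms Suc.IH] by (simp add: algebra_simps)
qed

lemma homog_poly_integral:
  assumes "homog_poly_family d G" "bounded S" "S \<in> sets lebesgue"
  shows "homog_poly d (\<lambda>z. integral S (\<lambda>x. G x z))"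
proof -
  obtain c where c: "\<And>k. continuous_on UNIV (c k)"
    "\<And>x z. G x z = (\<Sum>k\<le>d. c k x * (z$1)^k * (z$2)^(d-k))"
    using assms(1) unfolding homog_poly_family_def by blast
  have "c k integrable_on S" for k
    using continuous_absolutely_integrable_on_bounded[OF c(1) assms(2,3)]
      set_lebesgue_integral_eq_integral(1) by blast
  then have "integral S (\<lambda>x. G x z) = (\<Sum>k\<le>d. integral S (c k) * (z$1)^k * (z$2)^(d-k))" for z
    unfolding c(2) mult.assoc
    by (subst integral_sum) (auto intro: integrable_on_mult_left)
  then show ?thesis
    unfolding homog_poly_def by (intro exI[of _ "\<lambda>k. integral S (c k)"]) blast
qed

section \<open>Integrals of powers of quadratic forms\<close>

text \<open>For a unit vector \<open>z\<close>, the quadratic form in \<open>x\<close> with eigenvalue \<open>l1\<close> on \<open>z\<close> and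
  \<open>l2\<close> on \<open>z\<^sup>\<bottom>\<close>.\<close>

definition spectral_form :: "real \<Rightarrow> real \<Rightarrow> real^2 \<Rightarrow> real^2 \<Rightarrow> real" where
  "spectral_form l1 l2 z x = l1 * (z$1 * x$1 + z$2 * x$2)^2 + l2 * (z$1 * x$2 - z$2 * x$1)^2"

definition quad_form :: "real \<Rightarrow> real \<Rightarrow> real \<Rightarrow> real^2 \<Rightarrow> real" where
  "quad_form a b c x = a * x$1^2 + 2 * b * x$1 * x$2 + c * x$2^2"

lemma norm_vec2: "norm (x :: real^2) = sqrt (x$1^2 + x$2^2)"
  by (simp add: norm_eq_sqrt_inner inner_vec_def sum_2 power2_eq_square)

lemma norm_vec2_power2: "norm (x :: real^2)^2 = x$1^2 + x$2^2"
  unfolding dot_square_norm[symmetric] by (simp add: inner_vec_def sum_2 power2_eq_square)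

lemma continuous_on_spectral_form: "continuous_on UNIV (spectral_form l1 l2 z)"
  unfolding spectral_form_def by (intro continuous_intros)

lemma homog_poly_family_spectral_form: "homog_poly_family 2 (\<lambda>x z. spectral_form l1 l2 z x)"
proof -
  define c where "c (k::nat) =
    (if k = 0 then (\<lambda>x::real^2. l1 * x$2^2 + l2 * x$1^2)
     else if k = 1 then (\<lambda>x. 2 * (l1 - l2) * x$1 * x$2)
     else (\<lambda>x. l1 * x$1^2 + l2 * x$2^2))" for k
  have "continuous_on UNIV (c k)" for k
    unfolding c_def by (auto intro!: continuous_intros)
  moreover have "spectral_form l1 l2 z x = (\<Sum>k\<le>2. c k x * (z$1)^k * (z$2)^(2-k))" for x z
    by (simp add: numeral_2_eq_2 c_def spectral_form_def power2_eq_square algebra_simps)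
  ultimately show ?thesis
    unfolding homog_poly_family_def by blast
qed

lemma spectral_form_orthogonal:
  assumes "orthogonal_matrix U"
  shows "spectral_form l1 l2 (U *v z) (U *v y) = spectral_form l1 l2 z y"
proof -
  have orth: "transpose U ** U = mat 1"
    using assms orthogonal_matrix_def by blast
  have "(\<Sum>k\<in>UNIV. U$k$i * U$k$j) = (if i = j then 1 else 0)" for i j
    using arg_cong[OF orth, of "\<lambda>M. M$i$j"] by (simp add: matrix_matrix_mult_def mat_def transpose_def)
  then have cols: "U$1$1 * U$1$1 + U$2$1 * U$2$1 = 1" "U$1$2 * U$1$2 + U$2$2 * U$2$2 = 1"
    "U$1$1 * U$1$2 + U$2$1 * U$2$2 = 0"
    by (simp_all add: sum_2)
  have det: "(U$1$1 * U$2$2 - U$1$2 * U$2$1)^2 = 1"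
    using det_orthogonal_matrix[OF assms] by (auto simp: det_2)
  have "(U *v z)$1 * (U *v y)$1 + (U *v z)$2 * (U *v y)$2 =
      z$1 * y$1 * (U$1$1 * U$1$1 + U$2$1 * U$2$1) + z$2 * y$2 * (U$1$2 * U$1$2 + U$2$2 * U$2$2)
      + (z$1 * y$2 + z$2 * y$1) * (U$1$1 * U$1$2 + U$2$1 * U$2$2)"
    by (simp add: matrix_vector_mult_def sum_2 algebra_simps)
  then have dot: "(U *v z)$1 * (U *v y)$1 + (U *v z)$2 * (U *v y)$2 = z$1 * y$1 + z$2 * y$2"
    unfolding cols by simp
  have "(U *v z)$1 * (U *v y)$2 - (U *v z)$2 * (U *v y)$1 =
      (U$1$1 * U$2$2 - U$1$2 * U$2$1) * (z$1 * y$2 - z$2 * y$1)"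
    by (simp add: matrix_vector_mult_def sum_2 algebra_simps)
  then have cross: "((U *v z)$1 * (U *v y)$2 - (U *v z)$2 * (U *v y)$1)^2 = (z$1 * y$2 - z$2 * y$1)^2"
    by (simp only: power_mult_distrib det mult_1)
  show ?thesis
    unfolding spectral_form_def dot cross ..
qed

lemma integral_spectral_form_power_unit_indep:
  assumes frames: "admits_p_frames p \<Omega>" and \<Omega>: "bounded \<Omega>" "\<Omega> \<in> sets lebesgue"
    and "norm v = 1" "norm w = 1"
  shows "integral \<Omega> (\<lambda>x. spectral_form l1 l2 v x ^ p)
       = integral \<Omega> (\<lambda>x. spectral_form l1 l2 w x ^ p)"
proof -
  define f where "f z = integral \<Omega> (\<lambda>x. spectral_form l1 l2 z x ^ p)" for z
  have "homog_poly (2 * p) f"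
    using homog_poly_integral[OF homog_poly_family_power[OF homog_poly_family_spectral_form] \<Omega>]
    unfolding f_def by (simp add: mult.commute)
  moreover have "f (U *v z) = f z" if "U \<in> sym_group \<Omega>" for U z
  proof -
    have U: "orthogonal_matrix U" "(\<lambda>x. U *v x) ` \<Omega> = \<Omega>"
      using that by (auto simp: sym_group_def)
    have "spectral_form l1 l2 (U *v z) x = spectral_form l1 l2 z (transpose U *v x)" for x
    proof -
      have "U *v (transpose U *v x) = x"
        using U(1) unfolding orthogonal_matrix_def by (metis matrix_vector_mul_assoc matrix_vector_mul_lid)
      then show ?thesis
        using spectral_form_orthogonal[OF U(1), of l1 l2 z "transpose U *v x"] by simp
    qed
    then show ?thesis
      unfolding f_def
      using integral_orthogonal_invariant[OF U _ \<Omega>, of "\<lambda>x. spectral_form l1 l2 z x ^ p"]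
      by (simp add: continuous_on_spectral_form continuous_on_power)
  qed
  ultimately obtain a where "\<And>x. f x = a * norm x ^ (2 * p)"
    using frames unfolding admits_p_frames_def by blast
  then show ?thesis
    using assms(4,5) unfolding f_def by simp
qed

text \<open>Diagonalisation of a symmetric \<open>2\<times>2\<close> matrix: the eigenvector is the unit vector at half
  the angle of \<open>(a - c, 2b)\<close>.\<close>

lemma quad_form_eq_spectral_form:
  fixes a b c :: real
  defines "r \<equiv> sqrt ((a - c)^2 + 4 * b^2)"
  obtains v where "norm v = 1"
    "\<And>x. quad_form a b c x = spectral_form ((a + c + r) / 2) ((a + c - r) / 2) v x"
proof (cases "r = 0")
  case True
  then have "(a - c)^2 + 4 * b^2 = 0"
    unfolding r_def by simp
  then have "b = 0" "a = c"
    using zero_le_power2[of "a - c"] zero_le_power2[of b] by (simp_all add: add_nonneg_eq_0_iff)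
  then show ?thesis
    using True by (intro that[of "vector [1, 0]"]) (auto simp: norm_vec2 quad_form_def spectral_form_def)
next
  case False
  have r: "r > 0" "r^2 = (a - c)^2 + 4 * b^2"
    using False unfolding r_def by (simp_all add: order_less_le)
  have "((a - c) / r)^2 + (2 * b / r)^2 = ((a - c)^2 + 4 * b^2) / r^2"
    by (simp add: power_divide power_mult_distrib add_divide_distrib)
  then have "((a - c) / r)^2 + (2 * b / r)^2 = 1"
    using r(1) unfolding r(2)[symmetric] by simp
  then obtain t where t: "cos t = (a - c) / r" "sin t = 2 * b / r"
    using sincos_total_2pi by metis
  define v :: "real^2" where "v = vector [cos (t / 2), sin (t / 2)]"
  have "cos t = cos (t / 2)^2 - sin (t / 2)^2" "sin t = 2 * sin (t / 2) * cos (t / 2)"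
    using cos_double[of "t / 2"] sin_double[of "t / 2"] by simp_all
  then have "r * ((v$1)^2 - (v$2)^2) = r * cos t" "2 * r * (v$1 * v$2) = r * sin t"
    by (simp_all add: v_def)
  then have double: "r * ((v$1)^2 - (v$2)^2) = a - c" "r * (v$1 * v$2) = b" "(v$1)^2 + (v$2)^2 = 1"
    using t r(1) by (simp_all add: v_def)
  have "quad_form a b c x = spectral_form ((a + c + r) / 2) ((a + c - r) / 2) v x" for x
  proof -
    have "spectral_form ((a + c + r) / 2) ((a + c - r) / 2) v x
        = (a + c) / 2 * ((v$1)^2 + (v$2)^2) * (x$1^2 + x$2^2)
          + r * ((v$1)^2 - (v$2)^2) / 2 * (x$1^2 - x$2^2) + 2 * (r * (v$1 * v$2)) * x$1 * x$2"
      unfolding spectral_form_def by (simp add: field_simps power2_eq_square)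
    then show ?thesis
      unfolding double quad_form_def by (simp add: field_simps power2_eq_square)
  qed
  moreover have "norm v = 1"
    using double(3) by (simp add: norm_vec2)
  ultimately show ?thesis
    using that by blast
qed

lemma integral_quad_form_power_eq:
  assumes "admits_p_frames p \<Omega>" "bounded \<Omega>" "\<Omega> \<in> sets lebesgue"
    and trace: "a + c = a' + c'" and det: "a * c - b^2 = a' * c' - b'^2"
  shows "integral \<Omega> (\<lambda>x. quad_form a b c x ^ p) = integral \<Omega> (\<lambda>x. quad_form a' b' c' x ^ p)"
proof -
  have "(a - c)^2 + 4 * b^2 = (a + c)^2 - 4 * (a * c - b^2)"
    "(a' - c')^2 + 4 * b'^2 = (a' + c')^2 - 4 * (a' * c' - b'^2)"
    by (simp_all add: power2_eq_square algebra_simps)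
  then have disc: "(a - c)^2 + 4 * b^2 = (a' - c')^2 + 4 * b'^2"
    using trace det by simp
  obtain v where v: "norm v = 1" "\<And>x. quad_form a b c x = spectral_form
      ((a + c + sqrt ((a - c)^2 + 4 * b^2)) / 2) ((a + c - sqrt ((a - c)^2 + 4 * b^2)) / 2) v x"
    by (rule quad_form_eq_spectral_form[of a b c]) blast
  obtain w where w: "norm w = 1" "\<And>x. quad_form a' b' c' x = spectral_form
      ((a' + c' + sqrt ((a' - c')^2 + 4 * b'^2)) / 2) ((a' + c' - sqrt ((a' - c')^2 + 4 * b'^2)) / 2) w x"
    by (rule quad_form_eq_spectral_form[of a' b' c']) blast
  show ?thesis
    using integral_spectral_form_power_unit_indep[OF assms(1-3) v(1) w(1)]
    unfolding v(2) w(2) disc trace by simp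
qed

section \<open>Linear images\<close>

lemma area_matrix_image:
  "S \<in> lmeasurable \<Longrightarrow> area ((\<lambda>x. M *v x) ` S) = \<bar>det M\<bar> * area S"
  using measure_linear_image[OF matrix_vector_mul_linear] by (simp add: area_def)

lemma I_moment_matrix_image:
  assumes "bounded S" "S \<in> sets lebesgue"
  shows "I_moment q ((\<lambda>x. M *v x) ` S) = \<bar>det M\<bar> * integral S (\<lambda>x. norm (M *v x) ^ q)"
proof -
  have "continuous_on UNIV (\<lambda>x. norm (M *v x) ^ q)"
    by (intro continuous_intros linear_continuous_on matrix_vector_mul_bounded_linear)
  then have "((\<lambda>y. norm y ^ q) \<circ> (\<lambda>x. M *v x)) absolutely_integrable_on S"
    using continuous_absolutely_integrable_on_bounded[OF _ assms] by (simp add: o_def)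
  then show ?thesis
    unfolding I_moment_def by (simp add: integral_linear_image_real[OF matrix_vector_mul_linear] o_def)
qed

lemma matrix_inv_inverse:
  fixes T :: "real^'n^'n"
  assumes "invertible T"
  shows "T ** matrix_inv T = mat 1" "matrix_inv T ** T = mat 1"
  using someI_ex[OF assms[unfolded invertible_def]] by (simp_all add: matrix_inv_def)

lemma det_matrix_inv:
  fixes T :: "real^'n^'n"
  assumes "invertible T"
  shows "det (matrix_inv T) = 1 / det T"
  using det_mul[of T "matrix_inv T"] matrix_inv_inverse[OF assms] assms
  by (simp add: det_I invertible_det_nz field_simps)

lemma norm_matrix_power_eq_quad_form:
  "norm ((T :: real^2^2) *v x) ^ (2 * p) =
    quad_form (T$1$1^2 + T$2$1^2) (T$1$1 * T$1$2 + T$2$1 * T$2$2) (T$1$2^2 + T$2$2^2) x ^ p"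
proof -
  have "norm (T *v x) ^ 2 =
      quad_form (T$1$1^2 + T$2$1^2) (T$1$1 * T$1$2 + T$2$1 * T$2$2) (T$1$2^2 + T$2$2^2) x"
    unfolding norm_vec2_power2 by (simp add: quad_form_def matrix_vector_mult_def sum_2 power2_eq_square algebra_simps)
  then show ?thesis
    by (simp add: power_mult)
qed

text \<open>\<open>det T \<cdot> T\<^sup>-\<^sup>1\<close> is the adjugate of \<open>T\<close>, so this is the quadratic form of its Gram
  matrix.\<close>

lemma norm_matrix_inv_power_eq_quad_form:
  fixes T :: "real^2^2"
  assumes "invertible T"
  shows "norm (matrix_inv T *v x) ^ (2 * p) * \<bar>det T\<bar> ^ (2 * p) =
    quad_form (T$2$1^2 + T$2$2^2) (- (T$1$1 * T$2$1 + T$1$2 * T$2$2)) (T$1$1^2 + T$1$2^2) x ^ p"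
proof -
  define y where "y = matrix_inv T *v x"
  have "x = T *v y"
    unfolding y_def by (simp add: matrix_vector_mul_assoc matrix_inv_inverse[OF assms])
  moreover have "norm y ^ 2 * det T ^ 2 =
      quad_form (T$2$1^2 + T$2$2^2) (- (T$1$1 * T$2$1 + T$1$2 * T$2$2)) (T$1$1^2 + T$1$2^2) (T *v y)"
    unfolding norm_vec2_power2
    by (simp add: quad_form_def det_2 matrix_vector_mult_def sum_2 power2_eq_square algebra_simps)
  ultimately have "(norm y ^ 2 * det T ^ 2) ^ p =
      quad_form (T$2$1^2 + T$2$2^2) (- (T$1$1 * T$2$1 + T$1$2 * T$2$2)) (T$1$1^2 + T$1$2^2) x ^ p"
    by simp
  then show ?thesis
    unfolding y_def by (simp add: power_mult power_mult_distrib)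
qed

lemma integral_norm_matrix_inv_power:
  fixes T :: "real^2^2"
  assumes "admits_p_frames p \<Omega>" "bounded \<Omega>" "\<Omega> \<in> sets lebesgue" "invertible T"
  shows "integral \<Omega> (\<lambda>x. norm (matrix_inv T *v x) ^ (2 * p))
       = integral \<Omega> (\<lambda>x. norm (T *v x) ^ (2 * p)) / \<bar>det T\<bar> ^ (2 * p)"
proof -
  let ?Q = "\<lambda>x. quad_form (T$2$1^2 + T$2$2^2) (- (T$1$1 * T$2$1 + T$1$2 * T$2$2)) (T$1$1^2 + T$1$2^2) x ^ p"
  have "\<bar>det T\<bar> ^ (2 * p) \<noteq> 0"
    using assms(4) by (simp add: invertible_det_nz)
  then have "norm (matrix_inv T *v x) ^ (2 * p) = ?Q x / \<bar>det T\<bar> ^ (2 * p)" for x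
    using norm_matrix_inv_power_eq_quad_form[OF assms(4), of x p] by (simp add: eq_divide_eq)
  then have "integral \<Omega> (\<lambda>x. norm (matrix_inv T *v x) ^ (2 * p))
      = integral \<Omega> ?Q / \<bar>det T\<bar> ^ (2 * p)"
    by simp
  also have "integral \<Omega> ?Q = integral \<Omega> (\<lambda>x. norm (T *v x) ^ (2 * p))"
    unfolding norm_matrix_power_eq_quad_form
    by (rule integral_quad_form_power_eq[OF assms(1-3)]) (simp_all add: power2_eq_square algebra_simps)
  finally show ?thesis .
qed

theorem lemma6p3:
  fixes \<Omega> :: "(real^2) set" and T :: "real^2^2" and p :: nat
  assumes "open \<Omega>" and "connected \<Omega>" and "\<Omega> \<noteq> {}" and "bounded \<Omega>"
    and "p \<ge> 1"
    and "admits_p_frames p \<Omega>"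
    and "invertible T"
  shows "area ((\<lambda>x. T *v x) ` \<Omega>) ^ (1 + p) / I_moment (2*p) ((\<lambda>x. T *v x) ` \<Omega>)
       = area ((\<lambda>x. matrix_inv T *v x) ` \<Omega>) ^ (1 + p) / I_moment (2*p) ((\<lambda>x. matrix_inv T *v x) ` \<Omega>)"
proof -
  have \<Omega>: "\<Omega> \<in> lmeasurable" "\<Omega> \<in> sets lebesgue"
    using lmeasurable_open assms(1,4) by auto
  define d where "d = \<bar>det T\<bar>"
  define K where "K = integral \<Omega> (\<lambda>x. norm (T *v x) ^ (2 * p))"
  have "d > 0"
    using assms(7) by (simp add: d_def invertible_det_nz)
  moreover have "\<bar>det (matrix_inv T)\<bar> = 1 / d"
    using det_matrix_inv[OF assms(7)] by (simp add: d_def)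
  ultimately have images: "area ((\<lambda>x. T *v x) ` \<Omega>) = d * area \<Omega>"
    "area ((\<lambda>x. matrix_inv T *v x) ` \<Omega>) = area \<Omega> / d"
    "I_moment (2 * p) ((\<lambda>x. T *v x) ` \<Omega>) = d * K"
    "I_moment (2 * p) ((\<lambda>x. matrix_inv T *v x) ` \<Omega>) = K / (d * d ^ p * d ^ p)"
    using area_matrix_image[OF \<Omega>(1)] I_moment_matrix_image[OF assms(4) \<Omega>(2)]
      integral_norm_matrix_inv_power[OF assms(6,4) \<Omega>(2) assms(7)]
    by (simp_all add: d_def K_def mult_2 power_add)
  have "(d * A) ^ (1 + p) / (d * K) = (A / d) ^ (1 + p) / (K / (d * d ^ p * d ^ p))" for A
    using \<open>d > 0\<close> by (cases "K = 0") (simp_all add: power_divide power_mult_distrib power_add field_simps)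
  then show ?thesis
    unfolding images .
qed

end
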